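(* Let $A$ be a set of $n$ distinct real numbers forming an arithmetic progression. Then for every $a\in A$ there is an ordering $b_1,b_2,\dots,b_n$ of the elements of $A$ with $b_1=a$ such that the $n-1$ numbers $|b_2-b_1|,|b_3-b_2|,\dots,|b_n-b_{n-1}|$ are pairwise distinct. *)

theory Defs
  imports Complex_Main
begin

definition is_AP :: "real set \<Rightarrow> nat \<Rightarrow> bool" where
  "is_AP A n \<longleftrightarrow> (\<exists>c d. d \<noteq> 0 \<and> A = (\<lambda>i. c + real i * d) ` {..<n})"

end

theory Submission
  imports Defs
begin

text \<open>Identify the progression with \<open>{0..m}\<close>, \<open>m = n - 1\<close>, and call a listing of it
  with pairwise distinct steps a graceful path. Read backwards from its \<open>p\<close>-th term, the
  classical graceful path \<open>0, m, 1, m - 1, 2, \<dots>\<close> covers the \<open>p\<close> outermost points with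
  the \<open>p - 1\<close> largest steps and ends at \<open>0\<close>; a bridge of length \<open>m - p + 1\<close> then leads
  into the middle interval, which a reflected graceful path of length \<open>m - p\<close> fills with the
  remaining small steps. Keeping track of both endpoints, induction on \<open>m\<close> shows that every
  \<open>s\<close> with \<open>2 s \<le> m\<close> starts a graceful path ending at \<open>s + \<lceil>m/2\<rceil>\<close>: reversal followed by
  reflection exchanges \<open>s\<close> and \<open>\<lfloor>m/2\<rfloor> - s\<close>, so one may assume \<open>4 s \<le> m\<close>, and then a
  zigzag prefix of length \<open>2 s + 2\<close> (or \<open>2 s + 1\<close> if \<open>\<lfloor>m/2\<rfloor> = 2 s\<close>) reduces to a smaller
  instance.\<close>

fun steps :: "'a::{minus,abs} list \<Rightarrow> 'a list" where
  "steps (x # y # zs) = \<bar>y - x\<bar> # steps (y # zs)"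
| "steps _ = []"

lemma steps_conv_nth: "steps xs = map (\<lambda>i. \<bar>xs ! (i + 1) - xs ! i\<bar>) [0..<length xs - 1]"
proof (induction xs rule: steps.induct)
  case (1 x y zs)
  then show ?case by (simp add: upt_conv_Cons map_Suc_upt[symmetric] del: upt_Suc)
qed simp_all

lemma steps_Cons: "xs \<noteq> [] \<Longrightarrow> steps (x # xs) = \<bar>hd xs - x\<bar> # steps xs"
  by (cases xs) simp_all

lemma steps_append:
  "xs \<noteq> [] \<Longrightarrow> ys \<noteq> [] \<Longrightarrow> steps (xs @ ys) = steps xs @ \<bar>hd ys - last xs\<bar> # steps ys"
  by (induction xs rule: steps.induct) (auto simp: steps_Cons)

lemma steps_rev:
  fixes xs :: "'a::linordered_idom list"
  shows "steps (rev xs) = rev (steps xs)"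
proof (induction xs)
  case (Cons x xs)
  then show ?case by (cases "xs = []") (simp_all add: steps_append steps_Cons last_rev abs_minus_commute)
qed simp

lemma steps_map:
  assumes "\<And>x y. \<bar>f y - f x\<bar> = g \<bar>y - x\<bar>"
  shows "steps (map f xs) = map g (steps xs)"
  by (induction xs rule: steps.induct) (simp_all add: assms)

lemma steps_reflect:
  fixes xs :: "'a::linordered_idom list"
  shows "steps (map ((-) c) xs) = steps xs"
  using steps_map[of "(-) c" id xs] by (simp add: abs_minus_commute)

lemma steps_bounded:
  fixes xs :: "'a::linordered_idom list"
  assumes "set xs \<subseteq> {a..b}" "d \<in> set (steps xs)"
  shows "d \<le> b - a"
  using assms by (induction xs rule: steps.induct) (auto simp: abs_le_iff)

definition graceful_path :: "int \<Rightarrow> int list \<Rightarrow> bool" where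
  "graceful_path m xs \<longleftrightarrow> distinct xs \<and> set xs = {0..m} \<and> distinct (steps xs)"

lemma graceful_path_nonempty: "graceful_path m xs \<Longrightarrow> 0 \<le> m \<Longrightarrow> xs \<noteq> []"
  by (auto simp: graceful_path_def)

lemma graceful_path_rev: "graceful_path m xs \<Longrightarrow> graceful_path m (rev xs)"
  by (simp add: graceful_path_def steps_rev)

lemma graceful_path_reflect: "graceful_path m xs \<Longrightarrow> graceful_path m (map ((-) m) xs)"
  unfolding graceful_path_def
  by (auto simp: distinct_map inj_on_def steps_reflect image_iff
      intro: bexI[where x = "m - x" for x])

definition zigzag :: "int \<Rightarrow> nat \<Rightarrow> int" where
  "zigzag m i = (if even i then int (i div 2) else m - int (i div 2))"

lemma set_zigzag_prefix:
  "set (map (zigzag m) [0..<p]) = {0..<int ((p + 1) div 2)} \<union> {m - int (p div 2)<..m}"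
proof (induction p)
  case (Suc p)
  then show ?case by (cases "even p") (auto simp: zigzag_def)
qed simp

lemma steps_zigzag_prefix:
  assumes "int p \<le> m + 1"
  shows "steps (map (zigzag m) [0..<p]) = map (\<lambda>i. m - int i) [0..<p - 1]"
  using assms by (auto simp: steps_conv_nth zigzag_def elim: oddE)

lemma distinct_zigzag_prefix:
  assumes "int p \<le> m + 1"
  shows "distinct (map (zigzag m) [0..<p])"
  using assms unfolding distinct_map by (auto simp: inj_on_def zigzag_def split: if_splits) presburger+

text \<open>The outer part uses the steps \<open>m - p + 2, \<dots>, m\<close>, the bridge the step \<open>m - p + 1\<close>,
  and the inner part only steps \<open>\<le> m - p\<close>.\<close>

lemma graceful_path_extend:
  fixes m p :: int and ys :: "int list"
  defines "zs \<equiv> rev (map (zigzag m) [0..<nat p]) @ map (\<lambda>y. m - p div 2 - y) ys"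
  assumes ys: "graceful_path (m - p) ys" "hd ys = (p + 1) div 2 - 1" and p: "0 < p" "p \<le> m"
  shows "graceful_path m zs \<and> hd zs = zigzag m (nat p - 1) \<and> last zs = m - p div 2 - last ys"
proof -
  define xs where "xs = map (zigzag m) [0..<nat p]"
  define ws where "ws = map (\<lambda>y. m - p div 2 - y) ys"
  have ys_ne: "ys \<noteq> []"
    using ys(1) p by (simp add: graceful_path_nonempty)
  have set_xs: "set xs = {0..<(p + 1) div 2} \<union> {m - p div 2<..m}"
    using set_zigzag_prefix[of m "nat p"] p by (simp add: xs_def zdiv_int add.commute)
  have "set ws = (\<lambda>y. m - p div 2 - y) ` {0..m - p}"
    using ys(1) by (simp add: ws_def graceful_path_def)
  also have "\<dots> = {(p + 1) div 2..m - p div 2}"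
    by (auto simp: image_iff intro: bexI[where x = "m - p div 2 - x" for x])
  finally have set_ws: "set ws = {(p + 1) div 2..m - p div 2}" .
  have "set zs = {0..m}"
    unfolding zs_def xs_def[symmetric] ws_def[symmetric] using set_ws set_xs p by auto
  moreover have "distinct zs"
    unfolding zs_def xs_def[symmetric] ws_def[symmetric]
    using distinct_zigzag_prefix[of "nat p" m] ys(1) p set_ws set_xs
    by (auto simp: xs_def ws_def graceful_path_def distinct_map inj_on_def)
  moreover have "distinct (steps zs)"
  proof -
    have outer: "steps (rev xs) = rev (map (\<lambda>i. m - int i) [0..<nat p - 1])"
      using p by (simp add: xs_def steps_rev steps_zigzag_prefix)
    have bridge: "\<bar>hd ws - last (rev xs)\<bar> = m - p + 1"
      using p ys(2) ys_ne by (simp add: xs_def ws_def last_rev hd_map zigzag_def)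
    have inner: "steps ws = steps ys"
      by (simp add: ws_def steps_reflect)
    have "rev xs \<noteq> []" "ws \<noteq> []"
      using p ys_ne by (simp_all add: xs_def ws_def)
    then have "steps zs = rev (map (\<lambda>i. m - int i) [0..<nat p - 1]) @ (m - p + 1) # steps ys"
      unfolding zs_def xs_def[symmetric] ws_def[symmetric] by (simp add: steps_append outer bridge inner)
    moreover have bound: "d \<le> m - p" if "d \<in> set (steps ys)" for d
      using steps_bounded[OF _ that, of 0 "m - p"] ys(1) by (simp add: graceful_path_def)
    ultimately show ?thesis
      using ys(1) by (auto simp: graceful_path_def distinct_map inj_on_def dest!: bound)
  qed
  ultimately show ?thesis
    using p ys_ne by (simp add: zs_def graceful_path_def hd_map last_map hd_rev)
qed

lemma graceful_path_half_apart:
  fixes m s :: int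
  assumes "0 \<le> s" "2 * s \<le> m"
  shows "\<exists>xs. graceful_path m xs \<and> hd xs = s \<and> last xs = s + (m + 1) div 2"
  using assms
proof (induction "nat m" arbitrary: m s rule: less_induct)
  case less
  have quarter: "\<exists>xs. graceful_path m xs \<and> hd xs = t \<and> last xs = t + (m + 1) div 2"
    if t: "0 \<le> t" "4 * t \<le> m" for t
  proof -
    consider "m = 0" | "0 < m" "m div 2 = 2 * t" | "4 * t + 2 \<le> m"
      using t by linarith
    then show ?thesis
    proof cases
      case 1
      then show ?thesis
        using t by (intro exI[of _ "[0]"]) (simp add: graceful_path_def)
    next
      case 2
      obtain ys where ys: "graceful_path (m - (2 * t + 1)) ys" "hd ys = 0" "last ys = t"
        using less.hyps[of "m - (2 * t + 1)" 0] 2 t by auto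
      have "graceful_path (m - (2 * t + 1)) (rev ys)" "hd (rev ys) = (2 * t + 1 + 1) div 2 - 1"
        using ys by (simp_all add: graceful_path_rev hd_rev)
      from graceful_path_extend[OF this] 2 t ys(2) show ?thesis
        by (auto simp: zigzag_def nat_add_distrib nat_mult_distrib last_rev)
    next
      case 3
      obtain ys where ys: "graceful_path (m - (2 * t + 2)) ys" "hd ys = t"
        "last ys = t + (m - (2 * t + 2) + 1) div 2"
        using less.hyps[of "m - (2 * t + 2)" t] 3 t by auto
      have "hd ys = (2 * t + 2 + 1) div 2 - 1"
        using ys(2) by simp
      from graceful_path_extend[OF ys(1) this] 3 t obtain zs where
        "graceful_path m zs" "hd zs = m - t" "last zs = m - (t + 1) - last ys"
        by (auto simp: zigzag_def nat_add_distrib nat_mult_distrib)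
      moreover have "zs \<noteq> []"
        using \<open>graceful_path m zs\<close> 3 t by (simp add: graceful_path_nonempty)
      moreover have "m - last zs = t + (m + 1) div 2"
        using \<open>last zs = m - (t + 1) - last ys\<close> ys(3) by presburger
      ultimately show ?thesis
        by (intro exI[of _ "map ((-) m) zs"]) (simp add: graceful_path_reflect hd_map last_map)
    qed
  qed
  show ?case
  proof (cases "4 * s \<le> m")
    case True
    then show ?thesis using quarter less.prems by blast
  next
    case False
    then have "0 \<le> m div 2 - s" "4 * (m div 2 - s) \<le> m"
      using less.prems by presburger+
    then obtain xs where xs: "graceful_path m xs" "hd xs = m div 2 - s"
      "last xs = m div 2 - s + (m + 1) div 2"
      using quarter by blast
    moreover have "xs \<noteq> []"
      using xs(1) less.prems by (simp add: graceful_path_nonempty)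
    ultimately show ?thesis
      by (intro exI[of _ "map ((-) m) (rev xs)"])
        (simp add: graceful_path_reflect graceful_path_rev hd_map last_map hd_rev last_rev, presburger)
  qed
qed

lemma graceful_path_from:
  fixes m k :: int
  assumes "0 \<le> k" "k \<le> m"
  shows "\<exists>xs. graceful_path m xs \<and> hd xs = k"
proof (cases "2 * k \<le> m")
  case True
  then show ?thesis
    using graceful_path_half_apart[of k m] assms by blast
next
  case False
  then obtain xs where xs: "graceful_path m xs" "hd xs = m - k"
    using graceful_path_half_apart[of "m - k" m] assms by auto
  moreover have "xs \<noteq> []"
    using xs(1) assms by (simp add: graceful_path_nonempty)
  ultimately show ?thesis
    by (intro exI[of _ "map ((-) m) xs"]) (simp add: graceful_path_reflect hd_map)
qed

lemma graceful_path_affine_image: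
  fixes c d :: real and xs :: "int list"
  defines "b \<equiv> map (\<lambda>x. c + real_of_int x * d) xs"
  assumes xs: "graceful_path (int n - 1) xs" and d: "d \<noteq> 0"
  shows "distinct b \<and> set b = (\<lambda>i. c + real i * d) ` {..<n} \<and> length b = n \<and>
    distinct (map (\<lambda>i. \<bar>b ! (i + 1) - b ! i\<bar>) [0..<n - 1])"
proof -
  have set_xs: "set xs = int ` {..<n}"
    using xs by (auto simp: graceful_path_def lessThan_atLeast0 image_int_atLeastLessThan)
  have len: "length b = n"
    using xs distinct_card[of xs] by (simp add: b_def graceful_path_def)
  have "steps b = map (\<lambda>\<delta>. real_of_int \<delta> * \<bar>d\<bar>) (steps xs)"
    unfolding b_def by (rule steps_map) (simp add: abs_mult flip: left_diff_distrib)
  then have "map (\<lambda>i. \<bar>b ! (i + 1) - b ! i\<bar>) [0..<n - 1] =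
      map (\<lambda>\<delta>. real_of_int \<delta> * \<bar>d\<bar>) (steps xs)"
    by (simp add: steps_conv_nth len)
  moreover have "distinct (map (\<lambda>\<delta>. real_of_int \<delta> * \<bar>d\<bar>) (steps xs))"
    using xs d by (simp add: graceful_path_def distinct_map inj_on_def)
  moreover have "distinct b"
    using xs d by (simp add: b_def graceful_path_def distinct_map inj_on_def)
  moreover have "set b = (\<lambda>i. c + real i * d) ` {..<n}"
    using set_xs by (simp add: b_def image_image)
  ultimately show ?thesis
    using len by simp
qed

theorem theorem1:
  fixes A :: "real set" and n :: nat and a :: real
  assumes "is_AP A n" and "card A = n" and "a \<in> A"
  shows "\<exists>b :: real list. distinct b \<and> set b = A \<and> length b = n \<and> b ! 0 = a \<and>
           distinct (map (\<lambda>i. \<bar>b ! (i + 1) - b ! i\<bar>) [0..<n - 1])"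
proof -
  obtain c d where cd: "d \<noteq> 0" "A = (\<lambda>i. c + real i * d) ` {..<n}"
    using assms(1) by (auto simp: is_AP_def)
  obtain k where k: "k < n" "a = c + real k * d"
    using assms(3) cd(2) by auto
  obtain xs where xs: "graceful_path (int n - 1) xs" "hd xs = int k"
    using graceful_path_from[of "int k" "int n - 1"] k(1) by auto
  have "xs \<noteq> []"
    using xs(1) k(1) by (simp add: graceful_path_nonempty)
  then have "(map (\<lambda>x. c + real_of_int x * d) xs) ! 0 = a"
    using xs(2) k(2) by (simp add: hd_conv_nth)
  then show ?thesis
    using graceful_path_affine_image[OF xs(1) cd(1), of c] cd(2) by blast
qed

end
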